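(* In the setting below, for all $i,j\in\{1,\ldots,N\}$, the coefficient of $b_j$ in the expansion of the class of $J\,b_i$ in the basis $B$ of $\mathcal{A}$ equals $\mathrm{Tr}(b_i\,b_j^* )$. (That is, the multiplication-by-$J$ map on $\mathcal{A}$ has matrix entries $\mathrm{Tr}(b_ib_j^* )$.)
   Context: Setting: $\mathbb{K}$ algebraically closed, $\mathbf{x}=(x_1,\ldots,x_m)$, $f_1,\ldots,f_s\in\mathbb{K}[\mathbf{x}]$ of degrees $d_i$, $\mathcal{I}=\langle f_1,\ldots,f_s\rangle$, $\mathcal{A}=\mathbb{K}[\mathbf{x}]/\mathcal{I}$ finite dimensional of dimension $N$. $\mathbb{K}[\mathbf{x}]_k$ = polynomials of total degree $\le k$; $\langle f_1,\ldots,f_s\rangle_d:=\{\sum_i q_if_i:\deg q_i\le d-d_i\}$; $\mathrm{Mon}_\le(\Delta)$ = monomials of degree $\le\Delta$. $B=[b_1,\ldots,b_N]$ are monomials $b_i=\mathbf{x}^{\alpha_i}$ of degree $\le D$ whose classes form a basis of $\mathcal{A}$, and $\Delta\ge2D$ is such that their classes also form a basis of $\mathbb{K}[\mathbf{x}]_\Delta/(\langle f_1,\ldots,f_s\rangle_{\Delta+1}\cap\mathbb{K}[\mathbf{x}]_\Delta)$. $\mathrm{Mac}_\Delta(\mathbf{f})$ is a matrix whose rows are the coefficient vectors (w.r.t. $\mathrm{Mon}_\le(\Delta)$) of a basis of $\langle f_1,\ldots,f_s\rangle_{\Delta+1}\cap\mathbb{K}[\mathbf{x}]_\Delta$. Fix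 $\mathbf{y}=(y_\alpha)_{|\alpha|\le\Delta}$ with $\mathrm{Mac}_\Delta(\mathbf{f})\mathbf{y}=0$ such that the moment matrix $\mathfrak{M}_B(\mathbf{y})=[y_{\alpha_i+\alpha_j}]_{i,j=1}^N$ is invertible. Define $\Lambda\in\mathcal{A}^*$ by $\Lambda(g)=\sum_{i}y_{\alpha_i}g_i$ where $g=\sum_i g_ib_i$ in $\mathcal{A}$. Write $\mathfrak{M}_B(\mathbf{y})^{-1}=[c_{ij}]$ and $b_i^*:=\sum_{j=1}^N c_{ji}b_j$. The generalized Jacobian $J$ is the unique element of $\mathrm{span}(b_1,\ldots,b_N)$ congruent to $\sum_{i=1}^N b_ib_i^*$ modulo $\mathcal{I}$. For $h\in\mathcal{A}$, $\mathrm{Tr}(h)$ is the trace of the $\mathbb{K}$-linear map $\mathcal{A}\to\mathcal{A}$, $g\mapsto hg$. *)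

theory Defs
  imports "HOL-Library.Poly_Mapping" "HOL-Computational_Algebra.Polynomial"
          "Jordan_Normal_Form.Matrix"
begin

text \<open>Multivariate polynomials over 'k: finitely supported maps from monomials
  (exponent vectors nat =>0 nat, variable x_(i+1) has index i) to coefficients.\<close>

type_synonym 'k mpoly = "(nat \<Rightarrow>\<^sub>0 nat) \<Rightarrow>\<^sub>0 'k"

definition mon_deg :: "(nat \<Rightarrow>\<^sub>0 nat) \<Rightarrow> nat" where
  "mon_deg a = (\<Sum>i\<in>Poly_Mapping.keys a. Poly_Mapping.lookup a i)"

text \<open>total degree (zero polynomial gets 0; it is handled separately where relevant)\<close>
definition tdeg :: "'k::zero mpoly \<Rightarrow> nat" where
  "tdeg p = (if p = 0 then 0 else Max (mon_deg ` Poly_Mapping.keys p))"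

definition Polys :: "nat \<Rightarrow> 'k::zero mpoly set" where
  "Polys m = {p. \<forall>a\<in>Poly_Mapping.keys p. Poly_Mapping.keys a \<subseteq> {..<m}}"

definition Polys_le :: "nat \<Rightarrow> nat \<Rightarrow> 'k::zero mpoly set" where
  "Polys_le m k = {p \<in> Polys m. tdeg p \<le> k}"

definition gen_ideal :: "nat \<Rightarrow> nat \<Rightarrow> (nat \<Rightarrow> 'k::comm_ring_1 mpoly) \<Rightarrow> 'k mpoly set" where
  "gen_ideal m s f = {\<Sum>i<s. q i * f i | q. \<forall>i<s. q i \<in> Polys m}"

definition trunc_ideal :: "nat \<Rightarrow> nat \<Rightarrow> (nat \<Rightarrow> 'k::comm_ring_1 mpoly) \<Rightarrow> nat \<Rightarrow> 'k mpoly set" where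
  "trunc_ideal m s f d = {\<Sum>i<s. q i * f i | q. \<forall>i<s. q i \<in> Polys m \<and>
       (q i = 0 \<or> tdeg (q i) + tdeg (f i) \<le> d)}"

definition mon :: "'k \<Rightarrow> (nat \<Rightarrow>\<^sub>0 nat) \<Rightarrow> 'k::zero mpoly" where
  "mon c a = Poly_Mapping.single a c"

definition classes_basis :: "'k::comm_ring_1 mpoly set \<Rightarrow> 'k mpoly set \<Rightarrow> nat \<Rightarrow> (nat \<Rightarrow> (nat \<Rightarrow>\<^sub>0 nat)) \<Rightarrow> bool" where
  "classes_basis V S N al \<longleftrightarrow> (\<forall>k<N. mon 1 (al k) \<in> V) \<and>
     (\<forall>g\<in>V. \<exists>!c. (\<forall>k\<ge>N. c k = 0) \<and> g - (\<Sum>k<N. mon (c k) (al k)) \<in> S)"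

definition coord :: "'k::comm_ring_1 mpoly set \<Rightarrow> nat \<Rightarrow> (nat \<Rightarrow> (nat \<Rightarrow>\<^sub>0 nat)) \<Rightarrow> 'k mpoly \<Rightarrow> nat \<Rightarrow> 'k" where
  "coord S N al g j = (THE c. (\<forall>k\<ge>N. c k = 0) \<and> g - (\<Sum>k<N. mon (c k) (al k)) \<in> S) j"

definition mult_trace :: "'k::comm_ring_1 mpoly set \<Rightarrow> nat \<Rightarrow> (nat \<Rightarrow> (nat \<Rightarrow>\<^sub>0 nat)) \<Rightarrow> 'k mpoly \<Rightarrow> 'k" where
  "mult_trace S N al h = (\<Sum>k<N. coord S N al (h * mon 1 (al k)) k)"

end

theory Submission
  imports Defs
begin

(*
  Proof idea.  Write A = K[x]/I, b_k = x^(al k) and let Lambda(g) = sum_k y_(al k) * g_k,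
  where g_k are the coordinates of the class of g in the basis B.

  (1) Lambda extends y on low-degree monomials: a monomial x^a of degree <= Delta is, modulo
      the truncated ideal W, a combination of B; since y annihilates W (Mac_Delta y = 0),
      y_a equals Lambda(x^a).  In particular Lambda(b_k b_r) = y_(al k + al r), i.e. the
      moment matrix is the Gram matrix of the bilinear form (g,h) |-> Lambda(g h) on B.
  (2) Hence, as C is the inverse of the moment matrix, the bstar_l form the dual basis:
      Lambda(g bstar_l) is the l-th coordinate of g.
  (3) Trace formula: the j-th coordinate of J b_i is Lambda(J b_i bstar_j) by (2); replacing J
      by sum_k b_k bstar_k (they agree modulo I) and applying (2) once more gives
      sum_k (k-th coordinate of b_i bstar_j b_k) = Tr(b_i bstar_j).
*)

lemma Polys_zero: "0 \<in> Polys m"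
  unfolding Polys_def by simp

lemma Polys_add: "p \<in> Polys m \<Longrightarrow> q \<in> Polys m \<Longrightarrow> p + q \<in> Polys m"
  unfolding Polys_def using keys_add[of p q] by blast

lemma Polys_diff: "p \<in> Polys m \<Longrightarrow> q \<in> Polys m \<Longrightarrow> (p - q :: 'k::ab_group_add mpoly) \<in> Polys m"
  unfolding Polys_def using keys_diff[of p q] by blast

lemma Polys_mult:
  assumes "p \<in> Polys m" "q \<in> Polys m"
  shows "(p * q :: 'k::comm_ring_1 mpoly) \<in> Polys m"
  unfolding Polys_def
proof (intro CollectI ballI)
  fix c assume "c \<in> Poly_Mapping.keys (p * q)"
  then obtain a b where "c = a + b" "a \<in> Poly_Mapping.keys p" "b \<in> Poly_Mapping.keys q"
    using keys_mult[of p q] by blast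
  then show "Poly_Mapping.keys c \<subseteq> {..<m}"
    using assms keys_add[of a b] unfolding Polys_def by blast
qed

lemma Polys_sum: "(\<And>t. t \<in> T \<Longrightarrow> p t \<in> Polys m) \<Longrightarrow> sum p T \<in> Polys m"
  by (induction T rule: infinite_finite_induct) (auto simp: Polys_zero Polys_add)

lemma Polys_mon: "Poly_Mapping.keys a \<subseteq> {..<m} \<Longrightarrow> mon c a \<in> Polys m"
  unfolding Polys_def mon_def by auto

lemma mon_mult: "mon a x * mon b z = (mon (a * b) (x + z) :: 'k::comm_ring_1 mpoly)"
  unfolding mon_def by (simp add: mult_single)

lemma mon_one_nonzero: "mon (1::'k::zero_neq_one) a \<noteq> 0"
  unfolding mon_def by (metis lookup_single_eq lookup_zero one_neq_zero)

lemma mon_deg_superset: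
  "finite A \<Longrightarrow> Poly_Mapping.keys a \<subseteq> A \<Longrightarrow> mon_deg a = (\<Sum>i\<in>A. Poly_Mapping.lookup a i)"
  unfolding mon_deg_def by (rule sum.mono_neutral_left) (auto simp: in_keys_iff)

lemma mon_deg_add: "mon_deg (a + b) = mon_deg a + mon_deg b"
proof -
  let ?A = "Poly_Mapping.keys a \<union> Poly_Mapping.keys b"
  have "mon_deg (a + b) = (\<Sum>i\<in>?A. Poly_Mapping.lookup (a + b) i)"
    using keys_add[of a b] by (intro mon_deg_superset) auto
  also have "\<dots> = (\<Sum>i\<in>?A. Poly_Mapping.lookup a i) + (\<Sum>i\<in>?A. Poly_Mapping.lookup b i)"
    by (simp add: lookup_add sum.distrib)
  also have "\<dots> = mon_deg a + mon_deg b"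
    using mon_deg_superset[of ?A a] mon_deg_superset[of ?A b] by simp
  finally show ?thesis .
qed

lemma tdeg_mon_one: "tdeg (mon (1::'k::zero_neq_one) a) = mon_deg a"
proof -
  have "Poly_Mapping.single a (1::'k) \<noteq> 0"
    using mon_one_nonzero[of a] unfolding mon_def .
  then show ?thesis
    unfolding tdeg_def mon_def by simp
qed

text \<open>The linear functional on polynomials with moment sequence y, i.e. p |-> y(p).
  The hypothesis Mac_Delta(f) y = 0 says exactly that it vanishes on W.\<close>

definition moment_functional :: "((nat \<Rightarrow>\<^sub>0 nat) \<Rightarrow> 'k) \<Rightarrow> 'k::comm_ring_1 mpoly \<Rightarrow> 'k" where
  "moment_functional y p = (\<Sum>a\<in>Poly_Mapping.keys p. Poly_Mapping.lookup p a * y a)"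

lemma moment_functional_superset:
  "finite A \<Longrightarrow> Poly_Mapping.keys p \<subseteq> A \<Longrightarrow>
    moment_functional y p = (\<Sum>a\<in>A. Poly_Mapping.lookup p a * y a)"
  unfolding moment_functional_def by (rule sum.mono_neutral_left) (auto simp: in_keys_iff)

lemma moment_functional_diff:
  "moment_functional y (p - q) = moment_functional y p - moment_functional y q"
proof -
  let ?A = "Poly_Mapping.keys p \<union> Poly_Mapping.keys q"
  have "moment_functional y (p - q) = (\<Sum>a\<in>?A. Poly_Mapping.lookup (p - q) a * y a)"
    using keys_diff[of p q] by (intro moment_functional_superset) auto
  also have "\<dots> = (\<Sum>a\<in>?A. Poly_Mapping.lookup p a * y a) - (\<Sum>a\<in>?A. Poly_Mapping.lookup q a * y a)"
    unfolding lookup_minus left_diff_distrib by (rule sum_subtractf)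
  also have "\<dots> = moment_functional y p - moment_functional y q"
    using moment_functional_superset[of ?A p] moment_functional_superset[of ?A q] by simp
  finally show ?thesis .
qed

lemma moment_functional_add:
  "moment_functional y (p + q) = moment_functional y p + moment_functional y q"
  using moment_functional_diff[of y "p + q" q] by simp

lemma moment_functional_sum:
  "moment_functional y (sum p T) = (\<Sum>t\<in>T. moment_functional y (p t))"
  by (induction T rule: infinite_finite_induct)
    (simp_all add: moment_functional_add moment_functional_def[of y 0])

lemma moment_functional_mon: "moment_functional y (mon c a) = c * y a"
  unfolding moment_functional_def mon_def by simp

lemma right_inverse_entries:
  fixes C :: "'k::comm_ring_1 mat"
  assumes "C \<in> carrier_mat n n" "mat n n g * C = 1\<^sub>m n" "k < n" "l < n"
  shows "(\<Sum>r<n. g (k, r) * C $$ (r, l)) = (if k = l then 1 else 0)"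
proof -
  have "(\<Sum>r<n. g (k, r) * C $$ (r, l)) = (mat n n g * C) $$ (k, l)"
    using assms(1,3,4) by (simp add: scalar_prod_def atLeast0LessThan)
  also have "\<dots> = 1\<^sub>m n $$ (k, l)"
    using assms(2) by (rule arg_cong)
  also have "\<dots> = (if k = l then 1 else 0)"
    using assms(3,4) by simp
  finally show ?thesis .
qed

locale monomial_basis =
  fixes m s :: nat and f :: "nat \<Rightarrow> 'k::field mpoly" and N :: nat
    and al :: "nat \<Rightarrow> (nat \<Rightarrow>\<^sub>0 nat)"
  assumes f_polys: "\<forall>i<s. f i \<in> Polys m"
    and basis: "classes_basis (Polys m) (gen_ideal m s f) N al"
begin

abbreviation I :: "'k mpoly set" where "I \<equiv> gen_ideal m s f"

abbreviation b :: "nat \<Rightarrow> 'k mpoly" where "b k \<equiv> mon 1 (al k)"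

abbreviation lin_comb :: "(nat \<Rightarrow> 'k) \<Rightarrow> 'k mpoly" where
  "lin_comb c \<equiv> (\<Sum>k<N. mon (c k) (al k))"

abbreviation bcoord :: "'k mpoly \<Rightarrow> nat \<Rightarrow> 'k" where "bcoord \<equiv> coord I N al"

lemma ideal_subset: "p \<in> I \<Longrightarrow> p \<in> Polys m"
  using f_polys unfolding gen_ideal_def by (auto intro!: Polys_sum Polys_mult)

lemma ideal_zero: "0 \<in> I"
  unfolding gen_ideal_def by (auto intro!: exI[of _ "\<lambda>i. 0"] Polys_zero)

lemma ideal_diff:
  assumes "p \<in> I" "p' \<in> I"
  shows "p - p' \<in> I"
proof -
  from assms obtain q q' where q: "p = (\<Sum>i<s. q i * f i)" "\<forall>i<s. q i \<in> Polys m"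
    and q': "p' = (\<Sum>i<s. q' i * f i)" "\<forall>i<s. q' i \<in> Polys m"
    unfolding gen_ideal_def by blast
  have "p - p' = (\<Sum>i<s. (q i - q' i) * f i)"
    using q q' by (simp add: sum_subtractf left_diff_distrib)
  moreover have "\<forall>i<s. q i - q' i \<in> Polys m"
    using q q' by (simp add: Polys_diff)
  ultimately show ?thesis
    unfolding gen_ideal_def by (intro CollectI exI[of _ "\<lambda>i. q i - q' i"] conjI) auto
qed

lemma ideal_add: "p \<in> I \<Longrightarrow> p' \<in> I \<Longrightarrow> p + p' \<in> I"
  using ideal_diff[of p "0 - p'"] ideal_diff[OF ideal_zero, of p'] by simp

lemma ideal_mult:
  assumes "r \<in> Polys m" "p \<in> I"
  shows "r * p \<in> I"
proof -
  from assms(2) obtain q where q: "p = (\<Sum>i<s. q i * f i)" "\<forall>i<s. q i \<in> Polys m"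
    unfolding gen_ideal_def by blast
  have "r * p = (\<Sum>i<s. (r * q i) * f i)"
    using q by (simp add: sum_distrib_left mult.assoc)
  moreover have "\<forall>i<s. r * q i \<in> Polys m"
    using q assms(1) by (simp add: Polys_mult)
  ultimately show ?thesis
    unfolding gen_ideal_def by (intro CollectI exI[of _ "\<lambda>i. r * q i"] conjI) auto
qed

lemma basis_keys: "k < N \<Longrightarrow> Poly_Mapping.keys (al k) \<subseteq> {..<m}"
  using basis mon_one_nonzero[of "al k"] unfolding classes_basis_def Polys_def mon_def by auto

lemma mon_basis_polys: "k < N \<Longrightarrow> mon c (al k) \<in> Polys m"
  by (rule Polys_mon) (rule basis_keys)

lemma lin_comb_polys: "lin_comb c \<in> Polys m"
  by (rule Polys_sum) (simp add: mon_basis_polys)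

lemma const_polys: "mon a 0 \<in> Polys m"
  by (rule Polys_mon) simp

lemma coord_unique: "g \<in> Polys m \<Longrightarrow> \<exists>!c. (\<forall>k\<ge>N. c k = 0) \<and> g - lin_comb c \<in> I"
  using basis unfolding classes_basis_def by blast

lemma coord_spec:
  assumes "g \<in> Polys m"
  shows "(\<forall>k\<ge>N. bcoord g k = 0) \<and> g - lin_comb (bcoord g) \<in> I"
  using theI'[OF coord_unique[OF assms]] unfolding coord_def by blast

lemma coord_eqI:
  assumes "g \<in> Polys m" "\<forall>k\<ge>N. c k = 0" "g - lin_comb c \<in> I"
  shows "bcoord g = c"
  using the1_equality[OF coord_unique[OF assms(1)]] assms unfolding coord_def by blast

lemma coord_cong:
  assumes "g \<in> Polys m" "g' \<in> Polys m" "g - g' \<in> I"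
  shows "bcoord g = bcoord g'"
proof (rule coord_eqI[OF assms(1)])
  show "\<forall>k\<ge>N. bcoord g' k = 0"
    using coord_spec[OF assms(2)] by blast
  have "g - lin_comb (bcoord g') = (g - g') + (g' - lin_comb (bcoord g'))"
    by simp
  then show "g - lin_comb (bcoord g') \<in> I"
    using ideal_add[OF assms(3) conjunct2[OF coord_spec[OF assms(2)]]] by (simp only:)
qed

lemma coord_add:
  assumes "g \<in> Polys m" "h \<in> Polys m"
  shows "bcoord (g + h) = (\<lambda>k. bcoord g k + bcoord h k)"
proof (rule coord_eqI)
  show "g + h \<in> Polys m"
    using assms by (rule Polys_add)
  show "\<forall>k\<ge>N. bcoord g k + bcoord h k = 0"
    using coord_spec[OF assms(1)] coord_spec[OF assms(2)] by simp
  have "g + h - lin_comb (\<lambda>k. bcoord g k + bcoord h k)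
      = (g - lin_comb (bcoord g)) + (h - lin_comb (bcoord h))"
    by (simp add: mon_def single_add sum.distrib)
  then show "g + h - lin_comb (\<lambda>k. bcoord g k + bcoord h k) \<in> I"
    using ideal_add[OF conjunct2[OF coord_spec[OF assms(1)]] conjunct2[OF coord_spec[OF assms(2)]]]
    by (simp only:)
qed

lemma coord_smult:
  assumes "g \<in> Polys m"
  shows "bcoord (mon a 0 * g) = (\<lambda>k. a * bcoord g k)"
proof (rule coord_eqI)
  show "mon a 0 * g \<in> Polys m"
    using const_polys assms by (rule Polys_mult)
  show "\<forall>k\<ge>N. a * bcoord g k = 0"
    using coord_spec[OF assms] by simp
  have "mon a 0 * g - lin_comb (\<lambda>k. a * bcoord g k) = mon a 0 * (g - lin_comb (bcoord g))"
    by (simp add: sum_distrib_left mon_mult right_diff_distrib)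
  then show "mon a 0 * g - lin_comb (\<lambda>k. a * bcoord g k) \<in> I"
    using ideal_mult[OF const_polys] coord_spec[OF assms] by simp
qed

lemma coord_sum:
  "finite T \<Longrightarrow> (\<And>t. t \<in> T \<Longrightarrow> p t \<in> Polys m) \<Longrightarrow>
    bcoord (sum p T) = (\<lambda>k. \<Sum>t\<in>T. bcoord (p t) k)"
proof (induction T rule: finite_induct)
  case empty
  show ?case
    by (rule coord_eqI) (auto simp: Polys_zero ideal_zero mon_def)
next
  case (insert x F)
  have "bcoord (sum p (insert x F)) = bcoord (p x + sum p F)"
    using insert.hyps by simp
  also have "\<dots> = (\<lambda>k. bcoord (p x) k + bcoord (sum p F) k)"
    using insert.prems by (intro coord_add) (auto intro!: Polys_sum)
  finally show ?case
    using insert by simp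
qed

definition Lambda :: "((nat \<Rightarrow>\<^sub>0 nat) \<Rightarrow> 'k) \<Rightarrow> 'k mpoly \<Rightarrow> 'k" where
  "Lambda y g = (\<Sum>k<N. y (al k) * bcoord g k)"

lemma Lambda_cong: "g \<in> Polys m \<Longrightarrow> g' \<in> Polys m \<Longrightarrow> g - g' \<in> I \<Longrightarrow> Lambda y g = Lambda y g'"
  unfolding Lambda_def using coord_cong by simp

lemma Lambda_smult: "g \<in> Polys m \<Longrightarrow> Lambda y (mon a 0 * g) = a * Lambda y g"
  unfolding Lambda_def by (simp add: coord_smult sum_distrib_left mult.left_commute)

lemma Lambda_sum:
  "finite T \<Longrightarrow> (\<And>t. t \<in> T \<Longrightarrow> p t \<in> Polys m) \<Longrightarrow>
    Lambda y (sum p T) = (\<Sum>t\<in>T. Lambda y (p t))"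
  unfolding Lambda_def by (simp add: coord_sum sum_distrib_left sum.swap[of _ T])

lemma Lambda_extends_moments:
  assumes W_ideal: "W \<subseteq> I"
    and basis_W: "classes_basis (Polys_le m \<Delta>) W N al"
    and y_W: "\<forall>p\<in>W. moment_functional y p = 0"
    and low: "(mon 1 a :: 'k mpoly) \<in> Polys_le m \<Delta>"
  shows "Lambda y (mon 1 a) = y a"
proof -
  have "\<exists>!c. (\<forall>t\<ge>N. c t = 0) \<and> mon 1 a - lin_comb c \<in> W"
    using conjunct2[OF basis_W[unfolded classes_basis_def]] low by (rule bspec)
  then obtain c where c_fin: "\<forall>t\<ge>N. c t = 0" and c_W: "mon 1 a - lin_comb c \<in> W"
    by blast
  have "(mon 1 a :: 'k mpoly) \<in> Polys m"
    using low unfolding Polys_le_def by simp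
  then have coords: "bcoord (mon 1 a) = c"
    using c_fin c_W W_ideal by (intro coord_eqI) auto
  have "moment_functional y (mon 1 a - lin_comb c) = 0"
    using y_W c_W by blast
  then have "y a = (\<Sum>t<N. c t * y (al t))"
    by (simp add: moment_functional_diff moment_functional_mon moment_functional_sum)
  then show ?thesis
    unfolding Lambda_def coords by (simp add: mult.commute)
qed

lemma basis_product_low_degree:
  assumes "\<forall>i<N. mon_deg (al i) \<le> D" "2 * D \<le> \<Delta>" "k < N" "r < N"
  shows "b k * b r \<in> Polys_le m \<Delta>"
proof -
  have "mon_deg (al k) \<le> D" "mon_deg (al r) \<le> D"
    using assms(1,3,4) by auto
  then have deg: "mon_deg (al k) + mon_deg (al r) \<le> \<Delta>"
    using assms(2) by linarith
  have "Poly_Mapping.keys (al k + al r) \<subseteq> {..<m}"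
    using keys_add[of "al k" "al r"] basis_keys[OF assms(3)] basis_keys[OF assms(4)] by blast
  then have "mon 1 (al k + al r) \<in> Polys m"
    by (rule Polys_mon)
  moreover have "tdeg (mon (1::'k) (al k + al r)) \<le> \<Delta>"
    using deg by (simp add: tdeg_mon_one mon_deg_add)
  ultimately show ?thesis
    unfolding Polys_le_def by (simp add: mon_mult)
qed

context
  fixes y :: "(nat \<Rightarrow>\<^sub>0 nat) \<Rightarrow> 'k" and C :: "'k mat"
  assumes moments: "\<forall>k<N. \<forall>r<N. Lambda y (b k * b r) = y (al k + al r)"
    and inverse: "\<forall>k<N. \<forall>l<N. (\<Sum>r<N. y (al k + al r) * C $$ (r, l)) = (if k = l then 1 else 0)"
begin

abbreviation dual :: "nat \<Rightarrow> 'k mpoly" where "dual l \<equiv> lin_comb (\<lambda>j. C $$ (j, l))"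

lemma Lambda_bilinear:
  "Lambda y (lin_comb c * lin_comb d) = (\<Sum>k<N. \<Sum>r<N. c k * d r * y (al k + al r))"
proof -
  have term_polys: "k < N \<Longrightarrow> r < N \<Longrightarrow> mon (c k * d r) 0 * (b k * b r) \<in> Polys m" for k r
    by (intro Polys_mult const_polys mon_basis_polys)
  have "lin_comb c * lin_comb d = (\<Sum>k<N. \<Sum>r<N. mon (c k * d r) 0 * (b k * b r))"
    by (simp add: sum_product mon_mult)
  then have "Lambda y (lin_comb c * lin_comb d)
      = (\<Sum>k<N. Lambda y (\<Sum>r<N. mon (c k * d r) 0 * (b k * b r)))"
    using term_polys by (auto intro!: Lambda_sum Polys_sum)
  also have "\<dots> = (\<Sum>k<N. \<Sum>r<N. Lambda y (mon (c k * d r) 0 * (b k * b r)))"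
    using term_polys by (auto intro!: sum.cong Lambda_sum)
  also have "\<dots> = (\<Sum>k<N. \<Sum>r<N. c k * d r * y (al k + al r))"
    using moments by (simp add: Lambda_smult Polys_mult mon_basis_polys)
  finally show ?thesis .
qed

lemma Lambda_dual:
  assumes g: "g \<in> Polys m" and l: "l < N"
  shows "Lambda y (g * dual l) = bcoord g l"
proof -
  have "g * dual l - lin_comb (bcoord g) * dual l = dual l * (g - lin_comb (bcoord g))"
    by (simp add: algebra_simps)
  then have "Lambda y (g * dual l) = Lambda y (lin_comb (bcoord g) * dual l)"
    using g coord_spec[OF g]
    by (intro Lambda_cong) (auto intro: Polys_mult lin_comb_polys ideal_mult)
  also have "\<dots> = (\<Sum>k<N. bcoord g k * (\<Sum>r<N. y (al k + al r) * C $$ (r, l)))"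
    unfolding Lambda_bilinear by (simp add: sum_distrib_left mult_ac)
  also have "\<dots> = (\<Sum>k<N. bcoord g k * (if k = l then 1 else 0))"
    using inverse l by (intro sum.cong) auto
  also have "\<dots> = bcoord g l"
    using l by (simp add: if_distrib cong: if_cong)
  finally show ?thesis .
qed

lemma trace_formula:
  assumes J_cong: "J - (\<Sum>k<N. b k * dual k) \<in> I" and i: "i < N" and j: "j < N"
  shows "bcoord (J * b i) j = mult_trace I N al (b i * dual j)"
proof -
  let ?X = "\<Sum>k<N. b k * dual k" and ?h = "b i * dual j"
  have X_polys: "?X \<in> Polys m"
    by (intro Polys_sum Polys_mult mon_basis_polys lin_comb_polys) simp
  have J_polys: "J \<in> Polys m"
    using Polys_add[OF ideal_subset[OF J_cong] X_polys] by simp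
  have h_polys: "?h \<in> Polys m"
    using i by (intro Polys_mult mon_basis_polys lin_comb_polys)
  have diff: "J * b i * dual j - ?X * ?h = ?h * (J - ?X)"
    by (simp add: algebra_simps)
  have "Lambda y (J * b i * dual j) = Lambda y (?X * ?h)"
  proof (rule Lambda_cong)
    show "J * b i * dual j \<in> Polys m"
      using J_polys h_polys by (simp add: Polys_mult mult.assoc)
    show "?X * ?h \<in> Polys m"
      using X_polys h_polys by (rule Polys_mult)
    show "J * b i * dual j - ?X * ?h \<in> I"
      unfolding diff using h_polys J_cong by (rule ideal_mult)
  qed
  also have "?X * ?h = (\<Sum>k<N. (?h * b k) * dual k)"
    unfolding sum_distrib_right by (rule sum.cong) (simp_all only: mult_ac)
  also have "Lambda y \<dots> = (\<Sum>k<N. Lambda y ((?h * b k) * dual k))"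
    using h_polys by (intro Lambda_sum) (auto intro!: Polys_mult mon_basis_polys lin_comb_polys)
  also have "\<dots> = (\<Sum>k<N. bcoord (?h * b k) k)"
    using h_polys by (intro sum.cong) (auto intro!: Lambda_dual Polys_mult mon_basis_polys)
  finally show ?thesis
    using Lambda_dual[OF Polys_mult[OF J_polys mon_basis_polys[OF i]] j]
    unfolding mult_trace_def by simp
qed

end

end

theorem proposition3p2:
  fixes m s N D \<Delta> :: nat
    and f :: "nat \<Rightarrow> 'k::alg_closed_field mpoly"
    and al :: "nat \<Rightarrow> (nat \<Rightarrow>\<^sub>0 nat)"
    and y :: "(nat \<Rightarrow>\<^sub>0 nat) \<Rightarrow> 'k"
    and C :: "'k mat"
    and J :: "'k mpoly"
  defines "I \<equiv> gen_ideal m s f"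
    and "W \<equiv> trunc_ideal m s f (\<Delta> + 1) \<inter> Polys_le m \<Delta>"
    and "bstar \<equiv> (\<lambda>i. \<Sum>j<N. mon (C $$ (j, i)) (al j))"
  assumes f_polys: "\<forall>i<s. f i \<in> Polys m"
    and basis_A: "classes_basis (Polys m) I N al"
    and deg_b: "\<forall>i<N. mon_deg (al i) \<le> D"
    and Delta: "2 * D \<le> \<Delta>"
    and basis_trunc: "classes_basis (Polys_le m \<Delta>) W N al"
    and Mac_y: "\<forall>p\<in>W. (\<Sum>a\<in>Poly_Mapping.keys p. Poly_Mapping.lookup p a * y a) = 0"
    and moment_inv: "invertible_mat (mat N N (\<lambda>(i, j). y (al i + al j)))"
    and C_inv: "C \<in> carrier_mat N N" "mat N N (\<lambda>(i, j). y (al i + al j)) * C = 1\<^sub>m N"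
    and J_span: "\<exists>e. J = (\<Sum>k<N. mon (e k) (al k))"
    and J_cong: "J - (\<Sum>i<N. mon 1 (al i) * bstar i) \<in> I"
  shows "\<forall>i<N. \<forall>j<N. coord I N al (J * mon 1 (al i)) j = mult_trace I N al (mon 1 (al i) * bstar j)"
proof -
  interpret monomial_basis m s f N al
    using f_polys basis_A unfolding I_def by unfold_locales
  have W_ideal: "W \<subseteq> gen_ideal m s f"
    unfolding W_def trunc_ideal_def gen_ideal_def by blast
  have moments: "\<forall>k<N. \<forall>r<N. Lambda y (b k * b r) = y (al k + al r)"
    using Lambda_extends_moments[OF W_ideal basis_trunc] Mac_y basis_product_low_degree[OF deg_b Delta]
    unfolding moment_functional_def by (simp add: mon_mult)
  have inverse: "\<forall>k<N. \<forall>l<N. (\<Sum>r<N. y (al k + al r) * C $$ (r, l)) = (if k = l then 1 else 0)"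
    using right_inverse_entries[OF C_inv] by simp
  show ?thesis
    using trace_formula[OF moments inverse] J_cong unfolding I_def bstar_def by simp
qed

end
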